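(* Let $M_1$ and $M_2$ be matroids on a common ground set $E$ with the same rank $r$, and let $B$ be a common basis of $M_1$ and $M_2$. Then $D_{M_1,M_2}(B)$ is strongly connected if and only if $r_{M_1}(X)+r_{M_2}(E\setminus X)>r$ for every $X$ with $\emptyset\neq X\subsetneq E$.
   Context: $r_{M}$ denotes the rank function of $M$. The digraph $D_{M_1,M_2}(B)$ has vertex set $E$; for each $x\in B$, $y\in E\setminus B$ it has an arc $xy$ if $B-x+y$ is a basis of $M_1$, and an arc $yx$ if $B-x+y$ is a basis of $M_2$. *)

theory Defs
  imports Main
begin

definition matroid :: "'a set \<Rightarrow> ('a set \<Rightarrow> bool) \<Rightarrow> bool" where
  "matroid E indep \<longleftrightarrow>
     finite E \<and>
     (\<forall>X. indep X \<longrightarrow> X \<subseteq> E) \<and>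
     indep {} \<and>
     (\<forall>X Y. indep X \<and> Y \<subseteq> X \<longrightarrow> indep Y) \<and>
     (\<forall>X Y. indep X \<and> indep Y \<and> card X < card Y \<longrightarrow>
        (\<exists>y \<in> Y - X. indep (insert y X)))"

definition basis :: "'a set \<Rightarrow> ('a set \<Rightarrow> bool) \<Rightarrow> 'a set \<Rightarrow> bool" where
  "basis E indep B \<longleftrightarrow> indep B \<and> B \<subseteq> E \<and>
     (\<forall>C. indep C \<and> B \<subseteq> C \<and> C \<subseteq> E \<longrightarrow> C = B)"

definition rank :: "('a set \<Rightarrow> bool) \<Rightarrow> 'a set \<Rightarrow> nat" where
  "rank indep X = Max {card Y | Y. Y \<subseteq> X \<and> indep Y}"

definition exchange_graph ::
  "'a set \<Rightarrow> ('a set \<Rightarrow> bool) \<Rightarrow> ('a set \<Rightarrow> bool) \<Rightarrow> 'a set \<Rightarrow> ('a \<times> 'a) set" where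
  "exchange_graph E indep1 indep2 B =
     {(x, y). x \<in> B \<and> y \<in> E - B \<and> basis E indep1 (insert y (B - {x}))} \<union>
     {(y, x). x \<in> B \<and> y \<in> E - B \<and> basis E indep2 (insert y (B - {x}))}"

definition strongly_connected :: "'a set \<Rightarrow> ('a \<times> 'a) set \<Rightarrow> bool" where
  "strongly_connected V A \<longleftrightarrow> (\<forall>u \<in> V. \<forall>v \<in> V. (u, v) \<in> A\<^sup>*)"

end

theory Submission
  imports Defs
begin

text \<open>
  For a common basis \<open>B\<close> and any \<open>X\<close>, the sets \<open>B \<inter> X\<close> and \<open>B - X\<close> witness
  \<open>r\<^sub>1(X) + r\<^sub>2(E - X) \<ge> |B| = r\<close>, and the inequality is strict iff
  \<open>B \<inter> X\<close> is not a maximal independent subset of \<open>X\<close> in \<open>M\<^sub>1\<close> or \<open>B - X\<close> is not one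
  of \<open>E - X\<close> in \<open>M\<^sub>2\<close>. By basis exchange, \<open>B \<inter> X\<close> fails to be maximal in \<open>X\<close>
  exactly when some \<open>B - x + y\<close> with \<open>x \<notin> X\<close>, \<open>y \<in> X\<close> is a basis, i.e. when an
  \<open>M\<^sub>1\<close>-arc enters \<open>X\<close>; symmetrically for \<open>M\<^sub>2\<close>. So the rank condition says that
  an arc enters every nonempty proper subset of \<open>E\<close>, which is strong connectivity.
\<close>

lemma indep_subset_ground: "matroid E indep \<Longrightarrow> indep I \<Longrightarrow> I \<subseteq> E"
  unfolding matroid_def by blast

lemma indep_finite: "matroid E indep \<Longrightarrow> indep I \<Longrightarrow> finite I"
  unfolding matroid_def by (meson finite_subset)

lemma indep_subset: "matroid E indep \<Longrightarrow> indep I \<Longrightarrow> J \<subseteq> I \<Longrightarrow> indep J"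
  unfolding matroid_def by blast

lemma indep_augment:
  "matroid E indep \<Longrightarrow> indep I \<Longrightarrow> indep J \<Longrightarrow> card I < card J \<Longrightarrow> \<exists>y\<in>J - I. indep (insert y I)"
  unfolding matroid_def by blast

lemma basis_indep: "basis E indep B \<Longrightarrow> indep B"
  unfolding basis_def by simp

lemma finite_indep_cards:
  assumes "matroid E indep"
  shows "finite {card Y | Y. Y \<subseteq> X \<and> indep Y}"
proof (rule finite_subset)
  show "{card Y | Y. Y \<subseteq> X \<and> indep Y} \<subseteq> {..card E}"
    using assms indep_subset_ground card_mono unfolding matroid_def by fastforce
qed simp

lemma card_le_rank:
  assumes "matroid E indep" "Y \<subseteq> X" "indep Y"
  shows "card Y \<le> rank indep X"
  unfolding rank_def using finite_indep_cards[OF assms(1)] assms by (intro Max_ge) auto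

lemma rank_leI:
  assumes "matroid E indep" "\<And>Y. Y \<subseteq> X \<Longrightarrow> indep Y \<Longrightarrow> card Y \<le> k"
  shows "rank indep X \<le> k"
proof -
  have "indep {}" using assms(1) unfolding matroid_def by blast
  then show ?thesis unfolding rank_def using finite_indep_cards[OF assms(1)] assms(2)
    by (subst Max_le_iff) auto
qed

lemma card_basis_eq_rank:
  assumes m: "matroid E indep" and B: "basis E indep B"
  shows "card B = rank indep E"
proof (rule antisym)
  show "card B \<le> rank indep E" using B card_le_rank[OF m] unfolding basis_def by simp
  show "rank indep E \<le> card B"
  proof (rule rank_leI[OF m], rule ccontr)
    fix Y assume Y: "Y \<subseteq> E" "indep Y" and "\<not> card Y \<le> card B"
    then obtain y where "y \<in> Y - B" "indep (insert y B)"
      using indep_augment[OF m, of B Y] B unfolding basis_def by auto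
    with Y B show False unfolding basis_def by blast
  qed
qed

lemma basis_if_card_eq_rank:
  assumes m: "matroid E indep" and "indep C" "card C = rank indep E"
  shows "basis E indep C"
  unfolding basis_def
proof (intro conjI allI impI)
  show "C \<subseteq> E" using indep_subset_ground m assms(2) by blast
  fix D assume D: "indep D \<and> C \<subseteq> D \<and> D \<subseteq> E"
  then have "card D \<le> card C" using card_le_rank[OF m, of D E] assms(3) by auto
  with D indep_finite[OF m] show "D = C" using card_seteq[of D C] by blast
qed fact

lemma indep_extend_to_card:
  assumes m: "matroid E indep" and "indep I" "indep S"
  shows "card I \<le> k \<Longrightarrow> k \<le> card S \<Longrightarrow> \<exists>J. indep J \<and> I \<subseteq> J \<and> J \<subseteq> I \<union> S \<and> card J = k"
proof (induction k)
  case 0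
  then show ?case using assms by auto
next
  case (Suc k)
  show ?case
  proof (cases "card I = Suc k")
    case True
    then show ?thesis using assms by auto
  next
    case False
    then obtain J where J: "indep J" "I \<subseteq> J" "J \<subseteq> I \<union> S" "card J = k"
      using Suc by auto
    then obtain y where y: "y \<in> S - J" "indep (insert y J)"
      using indep_augment[OF m J(1) assms(3)] Suc by auto
    have "card (insert y J) = Suc k" using y J indep_finite[OF m] by auto
    then show ?thesis using y J by (intro exI[of _ "insert y J"]) auto
  qed
qed

text \<open>Extend \<open>I + y\<close> to a basis inside \<open>I + y \<union> B\<close>; it misses some \<open>x \<in> B\<close>, and
  counting forces it to be \<open>B - x + y\<close>.\<close>
lemma basis_exchange_extending:
  assumes m: "matroid E indep" and B: "basis E indep B"
    and "I \<subseteq> B" "y \<notin> B" and indep_yI: "indep (insert y I)"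
  shows "\<exists>x\<in>B - I. basis E indep (insert y (B - {x}))"
proof -
  have iB: "indep B" and finB: "finite B"
    using basis_indep[OF B] indep_finite[OF m] by auto
  have "card (insert y I) \<le> card B"
    using card_le_rank[OF m _ indep_yI] card_basis_eq_rank[OF m B] indep_subset_ground[OF m indep_yI]
    by auto
  then obtain J where J: "indep J" "insert y I \<subseteq> J" "J \<subseteq> insert y I \<union> B" "card J = card B"
    using indep_extend_to_card[OF m indep_yI iB] by blast
  have "\<not> B \<subseteq> J"
  proof
    assume "B \<subseteq> J"
    then have "card (insert y B) \<le> card J"
      using J indep_finite[OF m J(1)] card_mono by (metis insert_subset)
    with J(4) \<open>y \<notin> B\<close> finB show False by simp
  qed
  then obtain x where x: "x \<in> B" "x \<notin> J" by blast
  have "card (insert y (B - {x})) = card B"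
    using x \<open>y \<notin> B\<close> finB card_Suc_Diff1 by fastforce
  moreover have "J \<subseteq> insert y (B - {x})" using J x \<open>I \<subseteq> B\<close> by auto
  ultimately have "J = insert y (B - {x})" using J(4) finB by (intro card_seteq) auto
  then have "basis E indep (insert y (B - {x}))"
    using basis_if_card_eq_rank[OF m J(1)] J(4) card_basis_eq_rank[OF m B] by simp
  moreover have "x \<notin> I" using x J by auto
  ultimately show ?thesis using x by blast
qed

lemma card_Int_basis_le_rank:
  assumes m: "matroid E indep" and B: "basis E indep B"
  shows "card (B \<inter> X) \<le> rank indep X"
  by (rule card_le_rank[OF m Int_lower2 indep_subset[OF m basis_indep[OF B] Int_lower1]])

lemma card_Int_basis_less_rank_iff:
  assumes m: "matroid E indep" and B: "basis E indep B"
  shows "card (B \<inter> X) < rank indep X \<longleftrightarrow>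
         (\<exists>x\<in>B - X. \<exists>y\<in>X - B. basis E indep (insert y (B - {x})))"
proof
  assume "card (B \<inter> X) < rank indep X"
  then obtain Y where Y: "Y \<subseteq> X" "indep Y" "card (B \<inter> X) < card Y"
    using rank_leI[OF m, of X "card (B \<inter> X)"] by (meson not_le)
  moreover have "indep (B \<inter> X)"
    using indep_subset[OF m basis_indep[OF B] Int_lower1] .
  ultimately obtain y where y: "y \<in> Y - B \<inter> X" "indep (insert y (B \<inter> X))"
    using indep_augment[OF m] by blast
  with Y obtain x where "x \<in> B - B \<inter> X" "basis E indep (insert y (B - {x}))"
    using basis_exchange_extending[OF m B Int_lower1, of y] by blast
  with y Y show "\<exists>x\<in>B - X. \<exists>y\<in>X - B. basis E indep (insert y (B - {x}))" by blast
next
  assume "\<exists>x\<in>B - X. \<exists>y\<in>X - B. basis E indep (insert y (B - {x}))"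
  then obtain x y where xy: "x \<in> B - X" "y \<in> X - B" "basis E indep (insert y (B - {x}))"
    by blast
  have "insert y (B \<inter> X) \<subseteq> insert y (B - {x})" using xy by auto
  then have "indep (insert y (B \<inter> X))"
    by (rule indep_subset[OF m basis_indep[OF xy(3)]])
  then have "card (insert y (B \<inter> X)) \<le> rank indep X"
    using card_le_rank[OF m] xy by simp
  moreover have "finite B" using indep_finite[OF m basis_indep[OF B]] .
  ultimately show "card (B \<inter> X) < rank indep X" using xy by simp
qed

lemma rtrancl_enters_set:
  "(u, v) \<in> A\<^sup>* \<Longrightarrow> u \<notin> X \<Longrightarrow> v \<in> X \<Longrightarrow> \<exists>a b. (a, b) \<in> A \<and> a \<notin> X \<and> b \<in> X"
proof (induction rule: rtrancl_induct)
  case (step y z)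
  then show ?case by (cases "y \<in> X") auto
qed simp

lemma strongly_connected_iff_entering_arc:
  assumes "A \<subseteq> V \<times> V"
  shows "strongly_connected V A \<longleftrightarrow>
         (\<forall>X. X \<noteq> {} \<and> X \<subset> V \<longrightarrow> (\<exists>a b. (a, b) \<in> A \<and> a \<notin> X \<and> b \<in> X))"
proof
  assume sc: "strongly_connected V A"
  show "\<forall>X. X \<noteq> {} \<and> X \<subset> V \<longrightarrow> (\<exists>a b. (a, b) \<in> A \<and> a \<notin> X \<and> b \<in> X)"
  proof (intro allI impI)
    fix X assume X: "X \<noteq> {} \<and> X \<subset> V"
    then obtain u v where "u \<in> V" "u \<notin> X" "v \<in> X" by blast
    with X sc show "\<exists>a b. (a, b) \<in> A \<and> a \<notin> X \<and> b \<in> X"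
      unfolding strongly_connected_def by (blast intro: rtrancl_enters_set)
  qed
next
  assume enter: "\<forall>X. X \<noteq> {} \<and> X \<subset> V \<longrightarrow> (\<exists>a b. (a, b) \<in> A \<and> a \<notin> X \<and> b \<in> X)"
  show "strongly_connected V A" unfolding strongly_connected_def
  proof (intro ballI)
    fix u v assume "u \<in> V" "v \<in> V"
    let ?X = "{w \<in> V. (w, v) \<in> A\<^sup>*}"
    have "?X = V"
    proof (rule ccontr)
      assume "?X \<noteq> V"
      with \<open>v \<in> V\<close> obtain a b where "(a, b) \<in> A" "a \<notin> ?X" "b \<in> ?X"
        using enter[rule_format, of ?X] by blast
      with assms show False by (auto intro: converse_rtrancl_into_rtrancl)
    qed
    with \<open>u \<in> V\<close> show "(u, v) \<in> A\<^sup>*" by blast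
  qed
qed

lemma exchange_graph_entering_iff:
  assumes "B \<subseteq> E"
  shows "(\<exists>a b. (a, b) \<in> exchange_graph E indep1 indep2 B \<and> a \<notin> X \<and> b \<in> X) \<longleftrightarrow>
         (\<exists>x\<in>B - X. \<exists>y\<in>X - B. basis E indep1 (insert y (B - {x}))) \<or>
         (\<exists>x\<in>B - (E - X). \<exists>y\<in>(E - X) - B. basis E indep2 (insert y (B - {x})))"
    (is "?arc \<longleftrightarrow> ?exch1 \<or> ?exch2")
proof
  assume ?arc
  then obtain a b where "(a, b) \<in> exchange_graph E indep1 indep2 B" "a \<notin> X" "b \<in> X"
    by blast
  then show "?exch1 \<or> ?exch2" unfolding exchange_graph_def by auto
next
  have basis_in_ground: "y \<in> E" if "basis E indep (insert y C)" for indep y C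
    using that unfolding basis_def by blast
  assume "?exch1 \<or> ?exch2"
  then show ?arc
  proof
    assume ?exch1
    then obtain x y where "x \<in> B - X" "y \<in> X - B" "basis E indep1 (insert y (B - {x}))"
      by blast
    with basis_in_ground show ?arc unfolding exchange_graph_def by blast
  next
    assume ?exch2
    then obtain x y where "x \<in> B - (E - X)" "y \<in> (E - X) - B" "basis E indep2 (insert y (B - {x}))"
      by blast
    with assms show ?arc unfolding exchange_graph_def by blast
  qed
qed

theorem lemma3p12:
  fixes E :: "'a set" and indep1 indep2 :: "'a set \<Rightarrow> bool" and B :: "'a set" and r :: nat
  assumes "matroid E indep1" and "matroid E indep2"
    and "rank indep1 E = r" and "rank indep2 E = r"
    and "basis E indep1 B" and "basis E indep2 B"
  shows "strongly_connected E (exchange_graph E indep1 indep2 B) \<longleftrightarrow>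
         (\<forall>X. X \<noteq> {} \<and> X \<subset> E \<longrightarrow> rank indep1 X + rank indep2 (E - X) > r)"
proof -
  have BE: "B \<subseteq> E" using assms(5) unfolding basis_def by simp
  have "finite B" using indep_finite[OF assms(1) basis_indep[OF assms(5)]] .
  have "B \<inter> (E - X) = B - X" for X using BE by blast
  then have r: "r = card (B \<inter> X) + card (B \<inter> (E - X))" for X
    using card_basis_eq_rank[OF assms(1,5)] assms(3) card_Int_Diff[OF \<open>finite B\<close>, of X] by simp
  have rank_sum_iff_entering_arc: "r < rank indep1 X + rank indep2 (E - X) \<longleftrightarrow>
      (\<exists>a b. (a, b) \<in> exchange_graph E indep1 indep2 B \<and> a \<notin> X \<and> b \<in> X)" for X
  proof -
    have "r < rank indep1 X + rank indep2 (E - X) \<longleftrightarrow>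
        card (B \<inter> X) < rank indep1 X \<or> card (B \<inter> (E - X)) < rank indep2 (E - X)"
      using r[of X] card_Int_basis_le_rank[OF assms(1,5), of X]
        card_Int_basis_le_rank[OF assms(2,6), of "E - X"] by linarith
    then show ?thesis
      by (simp only: card_Int_basis_less_rank_iff[OF assms(1,5)]
          card_Int_basis_less_rank_iff[OF assms(2,6)] exchange_graph_entering_iff[OF BE])
  qed
  have "exchange_graph E indep1 indep2 B \<subseteq> E \<times> E"
    using BE unfolding exchange_graph_def basis_def by auto
  then show ?thesis
    by (simp only: strongly_connected_iff_entering_arc rank_sum_iff_entering_arc)
qed

end
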